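(* For every odd prime $p$, $\gcd\big(S(2),\,2^p+1\big)=1$.
   Context: Let $p$ be an odd prime and $g$ an odd integer which is a primitive root modulo $p$ and modulo $2p$. Define $D_0^{(p)}=\{g^{2k}\bmod p : 0\le k\le \frac{p-1}{2}-1\}$, $D_1^{(p)}=\{g^{2k+1}\bmod p : 0\le k\le \frac{p-1}{2}-1\}$, $D_0^{(2p)}=\{g^{2k}\bmod 2p : 0\le k\le \frac{p-1}{2}-1\}$, $D_1^{(2p)}=\{g^{2k+1}\bmod 2p : 0\le k\le \frac{p-1}{2}-1\}$, viewed as subsets of $\{0,\dots,p-1\}$ resp. $\{0,1,\dots,2p-1\}$. For $j\in\{0,1\}$ let $2D_j^{(p)}=\{2a \bmod 2p : a\in D_j^{(p)}\}$. Let $C_1=D_1^{(2p)}\cup 2D_1^{(p)}\cup\{0\}$ and $C_0=D_0^{(2p)}\cup 2D_0^{(p)}\cup\{p\}$ (these partition $\{0,\dots,2p-1\}$). The binary sequence $s$ of period $2p$ is $s_i=1$ if $i\bmod 2p\in C_1$ and $s_i=0$ otherwise, and $S(2)=\sum_{i=0}^{2p-1}s_i2^i\in\mathbb{Z}$. *)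

theory Defs
  imports "HOL-Number_Theory.Number_Theory"
begin

definition int_primroot :: "nat \<Rightarrow> int \<Rightarrow> bool" where
  "int_primroot m g \<longleftrightarrow> residue_primroot m (nat (g mod int m))"

definition D0p :: "nat \<Rightarrow> int \<Rightarrow> nat set" where
  "D0p p g = {nat (g ^ (2*k) mod int p) | k. k < (p - 1) div 2}"
definition D1p :: "nat \<Rightarrow> int \<Rightarrow> nat set" where
  "D1p p g = {nat (g ^ (2*k+1) mod int p) | k. k < (p - 1) div 2}"
definition D0_2p :: "nat \<Rightarrow> int \<Rightarrow> nat set" where
  "D0_2p p g = {nat (g ^ (2*k) mod int (2*p)) | k. k < (p - 1) div 2}"
definition D1_2p :: "nat \<Rightarrow> int \<Rightarrow> nat set" where
  "D1_2p p g = {nat (g ^ (2*k+1) mod int (2*p)) | k. k < (p - 1) div 2}"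

definition C1 :: "nat \<Rightarrow> int \<Rightarrow> nat set" where
  "C1 p g = D1_2p p g \<union> (\<lambda>a. (2*a) mod (2*p)) ` D1p p g \<union> {0}"
definition C0 :: "nat \<Rightarrow> int \<Rightarrow> nat set" where
  "C0 p g = D0_2p p g \<union> (\<lambda>a. (2*a) mod (2*p)) ` D0p p g \<union> {p}"

definition seq_s :: "nat \<Rightarrow> int \<Rightarrow> nat \<Rightarrow> int" where
  "seq_s p g i = (if i mod (2*p) \<in> C1 p g then 1 else 0)"

definition S2 :: "nat \<Rightarrow> int \<Rightarrow> int" where
  "S2 p g = (\<Sum>i<2*p. seq_s p g i * 2 ^ i)"

end

theory Submission
  imports Defs
begin

(*
  Let N = 2^p + 1 and \<chi> the Legendre symbol modulo p. Since 2^p = -1 (mod N), S(2) is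
  congruent to 1 + \<Sum>0<i<p (s_i - s_{i+p}) 2^i. Describing C_1 through \<chi>, the differences
  s_i - s_{i+p} all vanish when \<chi>(2) = 1, and equal (-1)^i \<chi>(i) when \<chi>(2) = -1, so that
  S(2) = 1 + G (mod N) for the Gauss sum G = \<Sum>0<i<p \<chi>(i) (-2)^i. Let r be a prime dividing
  N and S(2), so G = -1 (mod r), and -2 is a p-th root of unity modulo r. If -2 = 1 (mod r),
  then G = \<Sum> \<chi>(i) = 0. Otherwise -2 has order p, hence p divides r - 1, and the classical
  evaluation G^2 = \<chi>(-1) p (mod r) forces r to divide p - 1 or p + 1, which is impossible for
  a prime r > p.
*)

lemma cong_abs_le_1_imp_eq:
  fixes x y m :: int
  assumes "\<bar>x\<bar> \<le> 1" "\<bar>y\<bar> \<le> 1" "[x = y] (mod m)" "m > 2"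
  shows "x = y"
proof -
  have "m dvd x - y" using assms(3) by (simp add: cong_iff_dvd_diff)
  moreover have "\<bar>x - y\<bar> < m" using assms by auto
  ultimately show ?thesis
    using dvd_imp_le_int[of "x - y" m] abs_dvd_iff[of m "x - y"] by (cases "x = y") auto
qed

lemma Legendre_cong:
  assumes "[a = b] (mod p)"
  shows "Legendre a p = Legendre b p"
proof -
  have "[a = 0] (mod p) \<longleftrightarrow> [b = 0] (mod p)" "QuadRes p a \<longleftrightarrow> QuadRes p b"
    using assms unfolding QuadRes_def by (meson cong_sym cong_trans)+
  then show ?thesis by (simp add: Legendre_def)
qed

lemma Legendre_cases: "\<not> [a = 0] (mod p) \<Longrightarrow> Legendre a p = 1 \<or> Legendre a p = -1"
  by (simp add: Legendre_def)

lemma Legendre_1: "p > 1 \<Longrightarrow> Legendre 1 p = 1"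
  unfolding Legendre_def QuadRes_def by (auto simp: cong_def intro!: exI[of _ 1])

lemma Legendre_mult:
  fixes p :: nat
  assumes "prime p" "2 < p"
  shows "Legendre (a * b) p = Legendre a p * Legendre b p"
proof -
  have "[Legendre (a * b) p = (a * b) ^ ((p - 1) div 2)] (mod p)"
    "[Legendre a p * Legendre b p = a ^ ((p - 1) div 2) * b ^ ((p - 1) div 2)] (mod p)"
    using euler_criterion[OF assms] cong_mult by blast+
  then have "[Legendre (a * b) p = Legendre a p * Legendre b p] (mod p)"
    by (metis cong_sym cong_trans power_mult_distrib)
  moreover have "\<bar>Legendre a p * Legendre b p\<bar> \<le> 1" "\<bar>Legendre (a * b) p\<bar> \<le> 1"
    by (auto simp: Legendre_def abs_mult)
  ultimately show ?thesis using assms(2) by (intro cong_abs_le_1_imp_eq) auto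
qed

lemma Legendre_power:
  fixes p :: nat
  assumes "prime p" "2 < p"
  shows "Legendre (a ^ n) p = Legendre a p ^ n"
  by (induction n) (use assms in \<open>simp_all add: Legendre_1 Legendre_mult\<close>)

lemma bij_betw_mult_mod_prime:
  fixes p a :: nat
  assumes "prime p" "\<not> p dvd a"
  shows "bij_betw (\<lambda>t. a * t mod p) {1..<p} {1..<p}"
proof -
  have cop: "coprime a p" using prime_imp_coprime[OF assms] by (simp add: ac_simps)
  have inj: "inj_on (\<lambda>t. a * t mod p) {1..<p}"
  proof
    fix x y assume xy: "x \<in> {1..<p}" "y \<in> {1..<p}" "a * x mod p = a * y mod p"
    then have "[x = y] (mod p)" using cong_mult_lcancel_nat[OF cop] by (simp add: cong_def)
    then show "x = y" using xy cong_less_modulus_unique_nat by auto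
  qed
  have "(\<lambda>t. a * t mod p) ` {1..<p} \<subseteq> {1..<p}"
  proof safe
    fix t assume t: "t \<in> {1..<p}"
    then have "\<not> p dvd t" by (auto dest: dvd_imp_le)
    then have "\<not> p dvd a * t" using assms prime_dvd_mult_iff by blast
    then show "a * t mod p \<in> {1..<p}" using assms prime_gt_0_nat by (auto simp: dvd_eq_mod_eq_0)
  qed
  with inj show ?thesis unfolding bij_betw_def using endo_inj_surj by blast
qed

lemma sum_Legendre_eq_0:
  fixes p :: nat
  assumes "prime p" "2 < p" "Legendre n p = -1"
  shows "(\<Sum>t\<in>{1..<p}. Legendre (int t) p) = 0"
proof -
  define a where "a = nat (n mod p)"
  have "[int a = n] (mod p)" unfolding a_def using assms(2) by (simp add: cong_def)
  then have La: "Legendre (int a) p = -1" using assms(3) Legendre_cong by metis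
  then have "\<not> p dvd a" by (auto simp: Legendre_def cong_0_iff)
  then have "(\<Sum>t\<in>{1..<p}. Legendre (int t) p)
      = (\<Sum>t\<in>{1..<p}. Legendre (int (a * t mod p)) p)"
    using sum.reindex_bij_betw[OF bij_betw_mult_mod_prime[OF assms(1)],
        where g="\<lambda>t. Legendre (int t) p"]
    by simp
  also have "\<dots> = (\<Sum>t\<in>{1..<p}. - Legendre (int t) p)"
  proof (rule sum.cong[OF refl])
    fix t
    have "Legendre (int (a * t mod p)) p = Legendre (int a * int t) p"
      by (rule Legendre_cong) (simp add: cong_def of_nat_mod)
    then show "Legendre (int (a * t mod p)) p = - Legendre (int t) p"
      using La by (simp add: Legendre_mult[OF assms(1,2)])
  qed
  finally show ?thesis by (simp add: sum_negf)
qed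

lemma power_gcd_cong_1:
  fixes x :: int
  assumes "[x ^ a = 1] (mod m)" "[x ^ b = 1] (mod m)" "a \<noteq> 0"
  shows "[x ^ gcd a b = 1] (mod m)"
proof -
  obtain u v where uv: "a * u = b * v + gcd a b" using bezout_nat[OF assms(3)] by blast
  have "[x ^ (a * u) = 1] (mod m)"
    using cong_pow[OF assms(1), of u] by (simp add: power_mult)
  moreover have "[x ^ (b * v + gcd a b) = x ^ gcd a b] (mod m)"
    using cong_mult[OF cong_pow[OF assms(2), of v] cong_refl[of "x ^ gcd a b"]]
    by (simp add: power_add power_mult)
  ultimately show ?thesis using uv by (metis cong_sym cong_trans)
qed

lemma power_cong_power_mod:
  fixes x :: int
  assumes "[x ^ n = 1] (mod m)"
  shows "[x ^ k = x ^ (k mod n)] (mod m)"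
proof -
  have "[(x ^ n) ^ (k div n) * x ^ (k mod n) = 1 ^ (k div n) * x ^ (k mod n)] (mod m)"
    by (intro cong_mult cong_pow assms cong_refl)
  then show ?thesis by (simp add: power_add[symmetric] power_mult[symmetric])
qed

lemma fermat_theorem_int:
  fixes r :: nat and x :: int
  assumes "prime r" "\<not> int r dvd x"
  shows "[x ^ (r - 1) = 1] (mod r)"
proof -
  define c where "c = nat (x mod r)"
  have xc: "[int c = x] (mod r)" unfolding c_def using prime_gt_0_nat[OF assms(1)]
    by (simp add: cong_def)
  then have "\<not> r dvd c" using assms(2) by (metis cong_dvd_iff int_dvd_int_iff)
  then have "[int c ^ (r - 1) = 1] (mod r)"
    using fermat_theorem[OF assms(1)] by (metis cong_int_iff of_nat_1 of_nat_power)
  then show ?thesis using cong_pow[OF xc] by (metis cong_sym cong_trans)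
qed

lemma sum_powers_root_of_unity_cong:
  fixes p r m :: nat and \<gamma> :: int
  assumes "prime p" "prime r" "[\<gamma> ^ p = 1] (mod r)" "\<not> [\<gamma> = 1] (mod r)" "m > 0"
  shows "[(\<Sum>i\<in>{1..<p}. \<gamma> ^ (i * m)) = (if p dvd m then int p - 1 else -1)] (mod r)"
proof (cases "p dvd m")
  case True
  then have "[\<gamma> ^ (i * m) = 1] (mod r)" for i
    using power_cong_power_mod[OF assms(3), of "i * m"] by simp
  then have "[(\<Sum>i\<in>{1..<p}. \<gamma> ^ (i * m)) = (\<Sum>i\<in>{1..<p}. 1)] (mod r)"
    by (intro cong_sum)
  then show ?thesis using True prime_gt_0_nat[OF assms(1)] by (simp add: of_nat_diff)
next
  case False
  define x where "x = \<gamma> ^ m"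
  have "\<not> [x = 1] (mod r)"
  proof
    assume "[x = 1] (mod r)"
    then have "[\<gamma> ^ gcd m p = 1] (mod r)"
      using power_gcd_cong_1[of \<gamma> m r p] assms(3,5) unfolding x_def by auto
    moreover have "coprime m p"
      using prime_imp_coprime[OF assms(1) False] by (simp add: ac_simps)
    ultimately show False using assms(4) by simp
  qed
  then have "\<not> int r dvd x - 1" by (simp add: cong_iff_dvd_diff)
  moreover have "[x ^ p = 1] (mod r)" unfolding x_def
    using cong_pow[OF assms(3), of m] by (simp add: power_mult[symmetric] mult.commute)
  then have "int r dvd (x - 1) * (\<Sum>i<p. x ^ i)"
    by (simp add: cong_iff_dvd_diff power_diff_1_eq)
  moreover have "prime (int r)" using assms(2) by simp
  ultimately have "int r dvd (\<Sum>i<p. x ^ i)" using prime_dvd_mult_iff by blast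
  moreover have "{..<p} = insert 0 {1..<p}" using prime_gt_0_nat[OF assms(1)] by auto
  moreover have "(\<Sum>i\<in>{1..<p}. \<gamma> ^ (i * m)) = (\<Sum>i\<in>{1..<p}. x ^ i)"
    unfolding x_def by (simp add: power_mult[symmetric] mult.commute)
  ultimately show ?thesis using False by (simp add: cong_iff_dvd_diff algebra_simps)
qed

definition Gauss_sum :: "nat \<Rightarrow> int \<Rightarrow> int" where
  "Gauss_sum p \<gamma> = (\<Sum>i\<in>{1..<p}. Legendre (int i) p * \<gamma> ^ i)"

lemma Gauss_sum_square_reindex:
  fixes p :: nat and \<gamma> :: int
  assumes "prime p" "2 < p"
  shows "Gauss_sum p \<gamma> ^ 2
    = (\<Sum>i\<in>{1..<p}. \<Sum>t\<in>{1..<p}. Legendre (int t) p * \<gamma> ^ (i + i * t mod p))"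
proof -
  define L where "L t = Legendre (int t) p" for t :: nat
  have "(\<Sum>j\<in>{1..<p}. L i * \<gamma> ^ i * (L j * \<gamma> ^ j))
      = (\<Sum>t\<in>{1..<p}. L t * \<gamma> ^ (i + i * t mod p))" if i: "i \<in> {1..<p}" for i
  proof -
    have "\<not> p dvd i" using i by (auto dest: dvd_imp_le)
    then have "(\<Sum>j\<in>{1..<p}. L i * \<gamma> ^ i * (L j * \<gamma> ^ j))
        = (\<Sum>t\<in>{1..<p}. L i * \<gamma> ^ i * (L (i * t mod p) * \<gamma> ^ (i * t mod p)))"
      using sum.reindex_bij_betw[OF bij_betw_mult_mod_prime[OF assms(1)],
          where g="\<lambda>j. L i * \<gamma> ^ i * (L j * \<gamma> ^ j)"] by simp
    also have "\<dots> = (\<Sum>t\<in>{1..<p}. L t * \<gamma> ^ (i + i * t mod p))"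
    proof (rule sum.cong[OF refl])
      fix t
      have "L (i * t mod p) = L i * L t"
        unfolding L_def using Legendre_cong[of "int (i * t mod p)" "int i * int t" p]
        by (simp add: cong_def of_nat_mod Legendre_mult[OF assms])
      moreover have "L i * L i = 1"
        using Legendre_cases[of "int i" p] i by (auto simp: L_def cong_def)
      ultimately show "L i * \<gamma> ^ i * (L (i * t mod p) * \<gamma> ^ (i * t mod p))
          = L t * \<gamma> ^ (i + i * t mod p)"
        by (simp add: power_add algebra_simps)
    qed
    finally show ?thesis .
  qed
  then show ?thesis
    unfolding Gauss_sum_def L_def[symmetric] power2_eq_square sum_product
    by (rule sum.cong[OF refl])
qed

lemma Gauss_sum_square_cong:
  fixes p r :: nat and \<gamma> n :: int
  assumes p: "prime p" "2 < p" and r: "prime r"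
    and \<gamma>: "[\<gamma> ^ p = 1] (mod r)" "\<not> [\<gamma> = 1] (mod r)"
    and n: "Legendre n p = -1"
  shows "[Gauss_sum p \<gamma> ^ 2 = Legendre (int (p - 1)) p * int p] (mod r)"
proof -
  define L where "L t = Legendre (int t) p" for t :: nat
  define A where "A = {1..<p}"
  have "[Gauss_sum p \<gamma> ^ 2 = (\<Sum>i\<in>A. \<Sum>t\<in>A. L t * \<gamma> ^ (i * (t + 1)))] (mod r)"
    unfolding Gauss_sum_square_reindex[OF p] L_def A_def
  proof (intro cong_sum cong_mult cong_refl)
    fix i t :: nat
    have "(i + i * t mod p) mod p = (i * (t + 1)) mod p"
      by (simp add: mod_add_right_eq algebra_simps)
    then show "[\<gamma> ^ (i + i * t mod p) = \<gamma> ^ (i * (t + 1))] (mod r)"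
      using power_cong_power_mod[OF \<gamma>(1)] by (metis cong_sym cong_trans)
  qed
  also have "(\<Sum>i\<in>A. \<Sum>t\<in>A. L t * \<gamma> ^ (i * (t + 1)))
      = (\<Sum>t\<in>A. L t * (\<Sum>i\<in>A. \<gamma> ^ (i * (t + 1))))"
    by (subst sum.swap) (simp add: sum_distrib_left)
  also have "[\<dots> = (\<Sum>t\<in>A. L t * (if t = p - 1 then int p - 1 else -1))] (mod r)"
  proof (intro cong_sum cong_mult cong_refl)
    fix t assume "t \<in> A"
    then have "p dvd t + 1 \<longleftrightarrow> t = p - 1" unfolding A_def by (auto dest: dvd_imp_le)
    then show "[(\<Sum>i\<in>A. \<gamma> ^ (i * (t + 1))) = (if t = p - 1 then int p - 1 else -1)] (mod r)"
      using sum_powers_root_of_unity_cong[OF p(1) r \<gamma>, of "t + 1"] unfolding A_def by simp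
  qed
  also have "(\<Sum>t\<in>A. L t * (if t = p - 1 then int p - 1 else -1))
      = int p * L (p - 1) - (\<Sum>t\<in>A. L t)"
  proof -
    have "(\<Sum>t\<in>A. L t * (if t = p - 1 then int p - 1 else -1))
        = (\<Sum>t\<in>A. (if t = p - 1 then int p * L t else 0) - L t)"
      by (rule sum.cong) (auto simp: algebra_simps)
    moreover have "p - 1 \<in> A" using p unfolding A_def by auto
    ultimately show ?thesis using A_def by (simp add: sum_subtractf)
  qed
  also have "\<dots> = L (p - 1) * int p"
    using sum_Legendre_eq_0[OF p n] unfolding L_def A_def by simp
  finally show ?thesis unfolding L_def .
qed

lemma prime_order_dvd_prime_minus_1:
  fixes p r :: nat and \<gamma> :: int
  assumes "prime p" "prime r" "[\<gamma> ^ p = 1] (mod r)" "\<not> [\<gamma> = 1] (mod r)"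
  shows "p dvd r - 1"
proof (rule ccontr)
  assume "\<not> p dvd r - 1"
  then have "coprime p (r - 1)" using prime_imp_coprime[OF assms(1)] by blast
  moreover have "\<not> int r dvd \<gamma>"
  proof
    assume "int r dvd \<gamma>"
    then have "int r dvd \<gamma> ^ p"
      using prime_gt_0_nat[OF assms(1)] by (intro dvd_trans[OF _ dvd_power]) auto
    then have "int r dvd 1" using assms(3) by (simp add: cong_dvd_iff)
    then show False using assms(2) by simp
  qed
  then have "[\<gamma> ^ (r - 1) = 1] (mod r)" using fermat_theorem_int[OF assms(2)] by blast
  ultimately show False
    using power_gcd_cong_1[OF assms(3)] assms(4) prime_gt_0_nat[OF assms(1)] by force
qed

lemma sign_mult_not_cong_1:
  fixes p r :: nat and e :: int
  assumes p: "prime p" "2 < p" and r: "prime r" and "p < r" and "e = 1 \<or> e = -1"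
  shows "\<not> [e * int p = 1] (mod r)"
proof
  assume key: "[e * int p = 1] (mod r)"
  from assms(5) show False
  proof
    assume "e = 1"
    then have "int r dvd int p - 1" using key by (simp add: cong_iff_dvd_diff)
    then have "r dvd p - 1" using p(2) by (simp add: of_nat_diff flip: int_dvd_int_iff)
    then have "r \<le> p - 1" using p(2) by (intro dvd_imp_le) auto
    then show False using \<open>p < r\<close> by simp
  next
    assume "e = -1"
    then have "int r dvd - (int p + 1)" using key by (simp add: cong_iff_dvd_diff)
    then have "int r dvd int (p + 1)" by (simp only: dvd_minus_iff of_nat_add of_nat_1)
    then have "r dvd p + 1" by (simp only: int_dvd_int_iff)
    then have "r \<le> p + 1" by (intro dvd_imp_le) auto
    then have "r = p + 1" using \<open>p < r\<close> by simp
    then show False using r p prime_odd_nat[OF r] prime_odd_nat[OF p(1)] by auto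
  qed
qed

lemma Gauss_sum_not_cong_minus_1:
  fixes p r :: nat and \<gamma> n :: int
  assumes p: "prime p" "2 < p" and r: "prime r" and \<gamma>: "[\<gamma> ^ p = 1] (mod r)"
    and n: "Legendre n p = -1"
  shows "\<not> [Gauss_sum p \<gamma> = -1] (mod r)"
proof
  assume G: "[Gauss_sum p \<gamma> = -1] (mod r)"
  show False
  proof (cases "[\<gamma> = 1] (mod r)")
    case True
    then have "[Gauss_sum p \<gamma> = (\<Sum>i\<in>{1..<p}. Legendre (int i) p * 1)] (mod r)"
      unfolding Gauss_sum_def by (intro cong_sum cong_mult cong_refl) (metis cong_pow power_one)
    then have "[0 = -1] (mod r)"
      using G sum_Legendre_eq_0[OF p n] cong_sym cong_trans by fastforce
    then show False using r by (simp add: cong_iff_dvd_diff)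
  next
    case False
    have "[Gauss_sum p \<gamma> ^ 2 = 1] (mod r)" using cong_pow[OF G, of 2] by simp
    then have key: "[Legendre (int (p - 1)) p * int p = 1] (mod r)"
      using Gauss_sum_square_cong[OF p r \<gamma> False n] by (metis cong_sym cong_trans)
    have "p < r"
      using prime_order_dvd_prime_minus_1[OF p(1) r \<gamma> False] prime_gt_1_nat[OF r]
      by (auto dest: dvd_imp_le)
    moreover have "\<not> p dvd p - 1" using p(2) by (auto dest: dvd_imp_le)
    then have "\<not> [int (p - 1) = 0] (mod p)"
      by (simp only: cong_0_iff int_dvd_int_iff not_False_eq_True)
    ultimately show False
      using sign_mult_not_cong_1[OF p r] Legendre_cases key by blast
  qed
qed

lemma Legendre_primroot:
  fixes p :: nat and g :: int
  assumes p: "prime p" "2 < p" and g: "int_primroot p g"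
  shows "Legendre g p = -1"
proof -
  define g0 where "g0 = nat (g mod p)"
  define h where "h = (p - 1) div 2"
  have "residue_primroot p g0" using g unfolding int_primroot_def g0_def by simp
  then have cop: "coprime p g0" and ord: "ord p g0 = p - 1"
    using totient_prime[OF p(1)] by (auto simp: residue_primroot_def)
  have g0g: "[int g0 = g] (mod p)" unfolding g0_def using p(2) by (simp add: cong_def)
  have "Legendre g p \<noteq> 1"
  proof
    assume "Legendre g p = 1"
    then have "[g ^ h = 1] (mod p)"
      using euler_criterion[OF p, of g] unfolding h_def by (metis cong_sym)
    then have "[int (g0 ^ h) = int 1] (mod p)"
      using cong_pow[OF g0g, of h] by (metis cong_trans of_nat_power of_nat_1)
    then have "[g0 ^ h = 1] (mod p)" by (simp only: cong_int_iff)
    moreover have "0 < h" "h < p - 1" using p(2) unfolding h_def by auto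
    ultimately show False using ord_minimal[of h p g0] ord by auto
  qed
  moreover have "\<not> [g = 0] (mod p)"
  proof
    assume "[g = 0] (mod p)"
    then have "p dvd g0" using g0g by (metis cong_0_iff cong_trans int_dvd_int_iff)
    then show False using coprime_common_divisor[OF cop dvd_refl] p(2) by auto
  qed
  ultimately show ?thesis using Legendre_cases by blast
qed

lemma D1p_eq:
  fixes p :: nat and g :: int
  assumes p: "prime p" "2 < p" and g: "int_primroot p g"
  shows "D1p p g = {y. 0 < y \<and> y < p \<and> Legendre (int y) p = -1}"
proof (rule Set.set_eqI, rule iffI)
  fix y assume "y \<in> D1p p g"
  then obtain k where k: "int y = g ^ (2 * k + 1) mod p" unfolding D1p_def using p(2) by auto
  then have "Legendre (int y) p = Legendre (g ^ (2 * k + 1)) p"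
    by (intro Legendre_cong) (simp add: cong_def)
  also have "\<dots> = -1" by (simp only: Legendre_power[OF p] Legendre_primroot[OF p g]) simp
  finally have "Legendre (int y) p = -1" .
  moreover from this have "y \<noteq> 0" by (cases "y = 0") (auto simp: Legendre_def)
  moreover have "int y < int p" using k p(2) by simp
  ultimately show "y \<in> {y. 0 < y \<and> y < p \<and> Legendre (int y) p = -1}" by simp
next
  fix y assume y: "y \<in> {y. 0 < y \<and> y < p \<and> Legendre (int y) p = -1}"
  define g0 where "g0 = nat (g mod p)"
  have "residue_primroot p g0" using g unfolding int_primroot_def g0_def by simp
  then have gen: "bij_betw (\<lambda>i. g0 ^ i mod p) {..<p - 1} (totatives p)"
    using residue_primroot_is_generator[of p g0] p totient_prime[OF p(1)] by simp
  have "\<not> p dvd y" using y by (auto dest: dvd_imp_le)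
  then have "coprime p y" by (rule prime_imp_coprime[OF p(1)])
  then have "y \<in> totatives p" using y by (auto simp: totatives_def coprime_commute)
  then obtain n where n: "n < p - 1" "y = g0 ^ n mod p"
    using gen unfolding bij_betw_def by auto
  have "[int g0 = g] (mod p)" unfolding g0_def using p(2) by (simp add: cong_def)
  then have yn: "int y = g ^ n mod p"
    using n(2) cong_pow[of "int g0" g p n] by (simp add: cong_def of_nat_mod)
  then have "Legendre (int y) p = Legendre (g ^ n) p"
    by (intro Legendre_cong) (simp add: cong_def)
  then have "(-1 :: int) ^ n = -1"
    using y by (simp only: Legendre_power[OF p] Legendre_primroot[OF p g]) simp
  then obtain k where "n = 2 * k + 1" by (metis oddE neg_one_even_power one_neq_neg_one)
  moreover from this have "y = nat (g ^ (2 * k + 1) mod p)" using yn by simp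
  ultimately show "y \<in> D1p p g" using n(1) unfolding D1p_def by auto
qed

lemma D1_2p_eq:
  fixes p :: nat and g :: int
  assumes p: "prime p" "2 < p" and g: "odd g" "int_primroot p g"
  shows "D1_2p p g = {x. x < 2 * p \<and> odd x \<and> Legendre (int x) p = -1}"
proof (rule Set.set_eqI, rule iffI)
  fix x assume "x \<in> D1_2p p g"
  then obtain k where k: "int x = g ^ (2 * k + 1) mod (2 * p)"
    unfolding D1_2p_def using p(2) by auto
  have "int x mod 2 = g ^ (2 * k + 1) mod 2" unfolding k by (rule mod_mod_cancel) simp
  also have "\<dots> = 1" using g(1) by (simp add: odd_iff_mod_2_eq_one[symmetric])
  finally have "odd x" by (simp add: odd_iff_mod_2_eq_one[symmetric])
  moreover have "int x < 2 * int p" using k p(2) by simp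
  moreover have "Legendre (int x) p = Legendre (g ^ (2 * k + 1)) p"
    using k by (intro Legendre_cong) (simp add: cong_def mod_mod_cancel)
  moreover have "Legendre (g ^ (2 * k + 1)) p = -1"
    by (simp only: Legendre_power[OF p] Legendre_primroot[OF p g(2)]) simp
  ultimately show "x \<in> {x. x < 2 * p \<and> odd x \<and> Legendre (int x) p = -1}" by simp
next
  fix x assume x: "x \<in> {x. x < 2 * p \<and> odd x \<and> Legendre (int x) p = -1}"
  have "Legendre (int (x mod p)) p = Legendre (int x) p"
    by (intro Legendre_cong) (simp add: cong_def of_nat_mod)
  then have L: "Legendre (int (x mod p)) p = -1" using x by simp
  moreover from L have "x mod p \<noteq> 0" by (cases "x mod p = 0") (auto simp: Legendre_def)
  ultimately have "x mod p \<in> D1p p g" using p(2) by (simp add: D1p_eq[OF p g(2)])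
  then obtain k where k: "k < (p - 1) div 2" "int (x mod p) = g ^ (2 * k + 1) mod p"
    unfolding D1p_def using p(2) by auto
  define z where "z = g ^ (2 * k + 1) mod (2 * p)"
  have "[z = int x] (mod p)"
    using k(2) unfolding z_def by (simp add: cong_def mod_mod_cancel of_nat_mod)
  moreover have "[z = int x] (mod 2)"
  proof -
    have "z mod 2 = g ^ (2 * k + 1) mod 2" unfolding z_def by (rule mod_mod_cancel) simp
    also have "\<dots> = 1" using g(1) by (simp add: odd_iff_mod_2_eq_one[symmetric])
    finally have "z mod 2 = 1" .
    moreover have "int x mod 2 = 1" using x by (simp add: odd_iff_mod_2_eq_one[symmetric])
    ultimately show ?thesis by (simp add: cong_def)
  qed
  moreover have "coprime 2 (int p)" using prime_odd_nat[OF p(1)] p(2) by simp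
  ultimately have "[z = int x] (mod 2 * int p)" by (intro coprime_cong_mult)
  then have "x = nat (g ^ (2 * k + 1) mod int (2 * p))"
    using x unfolding z_def by (simp add: cong_def)
  then show "x \<in> D1_2p p g" using k(1) unfolding D1_2p_def by blast
qed

lemma mem_C1_iff:
  fixes p :: nat and g :: int
  assumes p: "prime p" "2 < p" and g: "odd g" "int_primroot p g" and i: "i < 2 * p"
  shows "i \<in> C1 p g \<longleftrightarrow> i = 0 \<or> (odd i \<and> Legendre (int i) p = -1)
           \<or> (even i \<and> 0 < i \<and> Legendre (int (i div 2)) p = -1)"
proof -
  have "(\<lambda>a. (2 * a) mod (2 * p)) ` D1p p g = (\<lambda>a. 2 * a) ` D1p p g"
    by (rule image_cong) (auto simp: D1p_eq[OF p g(2)])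
  moreover have "i \<in> (\<lambda>a. 2 * a) ` D1p p g
      \<longleftrightarrow> even i \<and> 0 < i \<and> Legendre (int (i div 2)) p = -1"
    using i by (auto simp: D1p_eq[OF p g(2)] image_iff elim!: evenE)
  moreover have "i \<in> D1_2p p g \<longleftrightarrow> odd i \<and> Legendre (int i) p = -1"
    using D1_2p_eq[OF p g] i by simp
  ultimately show ?thesis unfolding C1_def by blast
qed

lemma seq_s_diff:
  fixes p :: nat and g :: int
  assumes p: "prime p" "2 < p" and g: "odd g" "int_primroot p g" and i: "0 < i" "i < p"
  shows "seq_s p g i - seq_s p g (i + p) =
         (if Legendre 2 p = 1 then 0 else (-1) ^ i * Legendre (int i) p)"
proof -
  define L where "L x = Legendre x p" for x
  have s: "seq_s p g j = (if j = 0 \<or> (odd j \<and> L (int j) = -1)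
      \<or> (even j \<and> 0 < j \<and> L (int (j div 2)) = -1) then 1 else 0)" if "j < 2 * p" for j
    using that mem_C1_iff[OF p g that] unfolding seq_s_def L_def by simp
  have half: "L (int j) = L 2 * L (int (j div 2))" if "even j" for j
    using that Legendre_mult[OF p, of 2 "int (j div 2)"] unfolding L_def by (auto elim!: evenE)
  have "\<not> [int i = 0] (mod p)" "\<not> [2 = 0] (mod int p)"
    using i p(2) by (auto simp: cong_def)
  then have Li: "L (int i) = 1 \<or> L (int i) = -1" and L2: "L 2 = 1 \<or> L 2 = -1"
    unfolding L_def by (auto dest: Legendre_cases)
  have Lip: "L (int (i + p)) = L (int i)"
    unfolding L_def by (rule Legendre_cong) (simp add: cong_def)
  have L3: "L a \<in> {-1, 0, 1}" for a unfolding L_def by (simp add: Legendre_def)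
  show ?thesis
  proof (cases "odd i")
    case True
    then have "even (i + p)" using prime_odd_nat[OF p(1)] p(2) by simp
    then show ?thesis
      using True s[of i] s[of "i + p"] i half[of "i + p"] Lip Li L2 L3[of "int ((i + p) div 2)"]
      unfolding L_def by auto
  next
    case False
    then have "odd (i + p)" using prime_odd_nat[OF p(1)] p(2) by simp
    then show ?thesis
      using False s[of i] s[of "i + p"] i half[of i] Lip Li L2 L3[of "int (i div 2)"]
      unfolding L_def by auto
  qed
qed

lemma sum_double_period_cong:
  fixes f :: "nat \<Rightarrow> int" and x :: int
  shows "[(\<Sum>i<2 * n. f i * x ^ i) = (\<Sum>i<n. (f i - f (i + n)) * x ^ i)] (mod x ^ n + 1)"
proof -
  have "(\<Sum>i<2 * n. f i * x ^ i) = (\<Sum>i<n. f i * x ^ i) + (\<Sum>i\<in>{n..<n + n}. f i * x ^ i)"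
    unfolding mult_2 using sum.atLeastLessThan_concat[of 0 n "n + n" "\<lambda>i. f i * x ^ i"]
    by (simp add: atLeast0LessThan)
  also have "(\<Sum>i\<in>{n..<n + n}. f i * x ^ i) = x ^ n * (\<Sum>i<n. f (i + n) * x ^ i)"
    using sum.shift_bounds_nat_ivl[of "\<lambda>i. f i * x ^ i" 0 n n]
    by (simp add: sum_distrib_left power_add atLeast0LessThan algebra_simps)
  moreover have "(\<Sum>i<n. (f i - f (i + n)) * x ^ i)
      = (\<Sum>i<n. f i * x ^ i) - (\<Sum>i<n. f (i + n) * x ^ i)"
    by (simp add: left_diff_distrib sum_subtractf)
  ultimately have "(\<Sum>i<2 * n. f i * x ^ i) - (\<Sum>i<n. (f i - f (i + n)) * x ^ i)
      = (x ^ n + 1) * (\<Sum>i<n. f (i + n) * x ^ i)"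
    by (simp add: algebra_simps)
  then show ?thesis by (simp add: cong_iff_dvd_diff)
qed

lemma S2_cong_Gauss_sum:
  fixes p :: nat and g :: int
  assumes p: "prime p" "2 < p" and g: "odd g" "int_primroot p g"
  shows "[S2 p g = 1 + (if Legendre 2 p = 1 then 0 else Gauss_sum p (-2))] (mod 2 ^ p + 1)"
proof -
  define d where "d i = seq_s p g i - seq_s p g (i + p)" for i
  have "seq_s p g 0 = 1" unfolding seq_s_def C1_def by simp
  moreover have "seq_s p g p = 0"
    using mem_C1_iff[OF p g, of p] p(2) prime_odd_nat[OF p(1)]
    by (simp add: seq_s_def Legendre_def cong_def)
  ultimately have "d 0 = 1" unfolding d_def by simp
  moreover have "{..<p} = insert 0 {1..<p}" using p(2) by auto
  ultimately have "(\<Sum>i<p. d i * 2 ^ i) = 1 + (\<Sum>i\<in>{1..<p}. d i * 2 ^ i)" by simp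
  also have "(\<Sum>i\<in>{1..<p}. d i * 2 ^ i)
      = (if Legendre 2 p = 1 then 0 else Gauss_sum p (-2))"
    unfolding Gauss_sum_def
    using seq_s_diff[OF p g] by (auto simp: d_def power_minus' intro!: sum.neutral sum.cong)
  finally show ?thesis
    using sum_double_period_cong[where f="seq_s p g" and n=p and x=2]
    unfolding S2_def d_def by simp
qed

lemma gcd_eq_1_if_no_common_prime_divisor:
  fixes a b :: int
  assumes "b \<noteq> 0"
    and "\<And>r :: nat. prime r \<Longrightarrow> int r dvd a \<Longrightarrow> int r dvd b \<Longrightarrow> False"
  shows "gcd a b = 1"
proof (rule ccontr)
  assume "gcd a b \<noteq> 1"
  then have "\<not> is_unit (gcd a b)" by simp
  then obtain q :: int where q: "prime q" "q dvd a" "q dvd b"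
    using prime_divisor_exists[of "gcd a b"] assms(1) by auto
  then have "int (nat q) = q" using prime_gt_0_int[OF q(1)] by simp
  with q show False using assms(2)[of "nat q"] by (metis prime_nat_int_transfer)
qed

theorem lemma10:
  fixes p :: nat and g :: int
  assumes "prime p" and "odd p" and "odd g"
    and "int_primroot p g" and "int_primroot (2*p) g"
  shows "gcd (S2 p g) (2 ^ p + 1) = 1"
proof (rule gcd_eq_1_if_no_common_prime_divisor)
  show "(2::int) ^ p + 1 \<noteq> 0" using zero_le_power[of "2::int" p] by linarith
  fix r :: nat assume r: "prime r" and S: "int r dvd S2 p g" and N: "int r dvd 2 ^ p + 1"
  have p: "prime p" "2 < p" using assms(1,2) prime_ge_2_nat[of p] by (auto simp: le_less)
  have "[1 + (if Legendre 2 p = 1 then 0 else Gauss_sum p (-2)) = 0] (mod r)"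
    using cong_dvd_modulus[OF S2_cong_Gauss_sum[OF p assms(3,4)] N] S
    by (metis cong_0_iff cong_sym cong_trans)
  moreover have "\<not> [1 = 0] (mod int r)" using r by (auto simp: cong_0_iff)
  ultimately have "[Gauss_sum p (-2) = -1] (mod r)"
    by (auto simp: cong_iff_dvd_diff add.commute split: if_splits)
  moreover have "(-2 :: int) ^ p - 1 = - (2 ^ p + 1)" using assms(2) by (simp add: power_minus_odd)
  then have "[(-2) ^ p = 1] (mod r)"
    using N unfolding cong_iff_dvd_diff by (simp only: dvd_minus_iff)
  ultimately show False
    using Gauss_sum_not_cong_minus_1[OF p r _ Legendre_primroot[OF p assms(4)]] by blast
qed

end
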